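(* Let $n,k$ be integers with $1<k<n-1$ and let $\mathcal{P}_{k,n}=\{x\in[0,1]^n:\sum_{i=1}^n x_i=k\}$. There is no strong Bernoulli factory for $\mathcal{P}_{k,n}$ that converges exponentially.
   Context: A Bernoulli factory with output set $V$ (for inputs $x\in[0,1]^n$) is a (possibly infinite) rooted binary tree whose internal nodes are labeled by an index $i\in[n]$ or a known constant $c\in(0,1)$ and whose leaves are labeled by elements of $V$; on input $x$ one walks from the root, at a node labeled $i$ flipping a fresh independent coin that is $1$ with probability $x_i$, at a node labeled $c$ a fresh coin of bias $c$, following the edge labeled by the outcome, and outputs the label of the leaf reached; $\mathcal{F}(x)$ is the output ($\emptyset$ if no leaf is reached). For a polytope $\mathcal{P}$ with vertex set $V$, a strong Bernoulli factory for $\mathcal{P}$ is such a factory with output set $V$ that terminates almost surely and satisfies $\mathbb{E}[\mathcal{F}(x)]=x$ for all $x\in\mathcal{P}$. Let $T_{\mathcal{F}}(x)$ be the depth of the leaf at which the execution of $\mathcal{F}$ on input $x$ terminates ($\infty$ if it does not terminate). $\mathcal{F}$ converges exponentially on a domain $S$ (here $S=\mathcal{P}_{k,n}$) if there is a constant $c<1$ with $\Pr[T_{\mathcal{F}}(x)>d]\le c^d$ for all positive integers $d$ and all $x\in S$. *)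

theory Defs
  imports "HOL-Analysis.Analysis"
begin

datatype ('n, 'v) bf_label = Coin 'n | Const real | Leaf 'v

text \<open>A (possibly infinite) rooted binary tree is encoded as a labelling of all
  finite bit strings (node addresses); the actual tree consists of the addresses all of
  whose proper prefixes are internal nodes. Labels below leaves are irrelevant.\<close>
type_synonym ('n, 'v) bf_tree = "bool list \<Rightarrow> ('n, 'v) bf_label"

fun bf_internal :: "('n, 'v) bf_label \<Rightarrow> bool" where
  "bf_internal (Coin i) = True"
| "bf_internal (Const c) = True"
| "bf_internal (Leaf v) = False"

fun edge_prob :: "real ^ 'n \<Rightarrow> ('n, 'v) bf_label \<Rightarrow> bool \<Rightarrow> real" where
  "edge_prob x (Coin i) b = (if b then x $ i else 1 - x $ i)"
| "edge_prob x (Const c) b = (if b then c else 1 - c)"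
| "edge_prob x (Leaf v) b = 0"

definition bf_node :: "('n, 'v) bf_tree \<Rightarrow> bool list \<Rightarrow> bool" where
  "bf_node t w \<longleftrightarrow> (\<forall>j < length w. bf_internal (t (take j w)))"

definition reach_prob :: "('n, 'v) bf_tree \<Rightarrow> real ^ 'n \<Rightarrow> bool list \<Rightarrow> real" where
  "reach_prob t x w =
     (if bf_node t w then (\<Prod>j < length w. edge_prob x (t (take j w)) (w ! j)) else 0)"

text \<open>Pr[T(x) > d]: probability that the walk reaches depth d+1.\<close>
definition prob_T_gt :: "('n, 'v) bf_tree \<Rightarrow> real ^ 'n \<Rightarrow> nat \<Rightarrow> real" where
  "prob_T_gt t x d = (\<Sum>w \<in> {w. length w = Suc d}. reach_prob t x w)"

definition prob_T_eq :: "('n, 'v) bf_tree \<Rightarrow> real ^ 'n \<Rightarrow> nat \<Rightarrow> real" where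
  "prob_T_eq t x d = (\<Sum>w \<in> {w. length w = d}.
      (case t w of Leaf v \<Rightarrow> reach_prob t x w | _ \<Rightarrow> 0))"

definition exp_part :: "('n, 'v::real_vector) bf_tree \<Rightarrow> real ^ 'n \<Rightarrow> nat \<Rightarrow> 'v" where
  "exp_part t x d = (\<Sum>w \<in> {w. length w = d}.
      (case t w of Leaf v \<Rightarrow> reach_prob t x w *\<^sub>R v | _ \<Rightarrow> 0))"

definition bernoulli_factory :: "('n, 'v) bf_tree \<Rightarrow> 'v set \<Rightarrow> bool" where
  "bernoulli_factory t V \<longleftrightarrow>
     (\<forall>w. bf_node t w \<longrightarrow> (\<forall>c. t w = Const c \<longrightarrow> 0 < c \<and> c < 1)
                      \<and> (\<forall>v. t w = Leaf v \<longrightarrow> v \<in> V))"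

definition vertices :: "'a::real_vector set \<Rightarrow> 'a set" where
  "vertices P = {v. v extreme_point_of P}"

text \<open>Strong Bernoulli factory for polytope P: output set = vertex set of P, almost sure
  termination and E[F(x)] = x for every x in P.\<close>
definition strong_bernoulli_factory :: "('n, real ^ 'n) bf_tree \<Rightarrow> (real ^ 'n) set \<Rightarrow> bool" where
  "strong_bernoulli_factory t P \<longleftrightarrow>
     bernoulli_factory t (vertices P) \<and>
     (\<forall>x \<in> P. (prob_T_eq t x) sums 1 \<and> (exp_part t x) sums x)"

definition converges_exponentially :: "('n, 'v) bf_tree \<Rightarrow> (real ^ 'n) set \<Rightarrow> bool" where
  "converges_exponentially t S \<longleftrightarrow>
     (\<exists>c < 1. \<forall>d > 0. \<forall>x \<in> S. prob_T_gt t x d \<le> c ^ d)"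

definition P_kn :: "nat \<Rightarrow> (real ^ 'n) set" where
  "P_kn k = {x. (\<forall>i. 0 \<le> x $ i \<and> x $ i \<le> 1) \<and> (\<Sum>i\<in>UNIV. x $ i) = real k}"

end

theory Submission
  imports Defs
begin

text \<open>Suppose the factory converges with rate \<open>c < 1\<close>. Fix coordinates \<open>i \<noteq> j\<close> and the point
  \<open>x\<close> of \<open>P\<^sub>k\<^sub>,\<^sub>n\<close> with \<open>x\<^sub>i = 1 - \<epsilon>\<close>, \<open>x\<^sub>j = \<epsilon>\<close> and all other coordinates in \<open>{0,1}\<close>.
  Since outputs are vertices and \<open>E[F(x)] = x\<close>, every leaf reachable on \<open>x\<close> reproduces the
  coordinates of \<open>x\<close> lying in \<open>{0,1}\<close>, so a reachable leaf \<open>v\<close> with \<open>v\<^sub>i < 1\<close> has \<open>v\<^sub>j > 0\<close>.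
  Such a leaf is unreachable on a point \<open>y\<close> with \<open>y\<^sub>i = 1\<close> and all other coordinates in
  \<open>(0,1)\<close>, so its path flips coin \<open>i\<close> to 0; comparing with a point having \<open>y\<^sub>j = 0\<close>, it also
  flips coin \<open>j\<close> to 1. On \<open>x\<close> these two flips cost a factor \<open>\<epsilon>\<^sup>2\<close>, so the part of
  \<open>E[1 - F\<^sub>i(x)] = \<epsilon>\<close> coming from depth \<open>d\<close> is at most \<open>d\<^sup>2\<epsilon>\<^sup>2\<close>, while depths beyond \<open>D\<close>
  contribute at most \<open>c\<^bsup>D-1\<^esup>/(1 - c)\<close>. For \<open>\<epsilon> = 1/(2D\<^sup>3)\<close> with \<open>D\<close> large this is less
  than \<open>\<epsilon>\<close>.\<close>

lemma sum_lists_length_Suc_snoc: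
  fixes f :: "bool list \<Rightarrow> 'a::comm_monoid_add"
  shows "(\<Sum>w | length w = Suc L. f w) = (\<Sum>u | length u = L. f (u @ [True]) + f (u @ [False]))"
proof -
  have "{w::bool list. length w = Suc L} = (\<lambda>(u, b). u @ [b]) ` ({u. length u = L} \<times> UNIV)"
  proof (intro set_eqI iffI)
    fix w :: "bool list"
    assume "w \<in> {w. length w = Suc L}"
    then have "w = butlast w @ [last w]" "length (butlast w) = L"
      by (auto intro: append_butlast_last_id[symmetric])
    then show "w \<in> (\<lambda>(u, b). u @ [b]) ` ({u. length u = L} \<times> UNIV)"
      by (metis (mono_tags, lifting) SigmaI UNIV_I case_prod_conv image_eqI mem_Collect_eq)
  qed auto
  moreover have "inj_on (\<lambda>(u, b). u @ [b]) ({u::bool list. length u = L} \<times> UNIV)"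
    by (auto simp: inj_on_def)
  ultimately have "(\<Sum>w | length w = Suc L. f w) = (\<Sum>(u, b)\<in>{u. length u = L} \<times> UNIV. f (u @ [b]))"
    by (simp add: sum.reindex case_prod_unfold)
  also have "\<dots> = (\<Sum>u | length u = L. f (u @ [True]) + f (u @ [False]))"
    by (simp add: sum.cartesian_product[symmetric] UNIV_bool add.commute)
  finally show ?thesis .
qed

lemma sum_paths_prod_le:
  fixes q :: "nat \<Rightarrow> bool list \<Rightarrow> bool \<Rightarrow> real"
  assumes "\<And>j u b. j < L \<Longrightarrow> 0 \<le> q j u b"
    and "\<And>j u. j < L \<Longrightarrow> q j u True + q j u False \<le> s j"
  shows "(\<Sum>w | length w = L. \<Prod>j<L. q j (take j w) (w ! j)) \<le> (\<Prod>j<L. s j)"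
  using assms
proof (induction L)
  case (Suc L)
  let ?P = "\<lambda>u. \<Prod>j<L. q j (take j u) (u ! j)"
  have snoc: "(\<Prod>j<Suc L. q j (take j (u @ [b])) ((u @ [b]) ! j)) = ?P u * q L u b"
    if "length u = L" for u b
  proof -
    have "(\<Prod>j<L. q j (take j (u @ [b])) ((u @ [b]) ! j)) = ?P u"
      using that by (intro prod.cong) (auto simp: nth_append)
    then show ?thesis
      using that by (simp add: prod.lessThan_Suc nth_append)
  qed
  have "0 \<le> s L"
    using Suc.prems[of L] by (meson add_nonneg_nonneg lessI order_trans)
  have "(\<Sum>w | length w = Suc L. \<Prod>j<Suc L. q j (take j w) (w ! j))
      = (\<Sum>u | length u = L. ?P u * (q L u True + q L u False))"
    unfolding sum_lists_length_Suc_snoc by (intro sum.cong) (simp_all only: mem_Collect_eq snoc distrib_left)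
  also have "\<dots> \<le> (\<Sum>u | length u = L. ?P u) * s L"
    unfolding sum_distrib_right using Suc.prems by (intro sum_mono mult_left_mono prod_nonneg) auto
  also have "\<dots> \<le> (\<Prod>j<L. s j) * s L"
    using Suc \<open>0 \<le> s L\<close> by (intro mult_right_mono) auto
  finally show ?case
    by (simp add: prod.lessThan_Suc)
qed simp

lemma prod_lessThan_two_points:
  fixes a b :: "'a::comm_monoid_mult" and m m' d :: nat
  assumes "m < d" "m' < d" "m \<noteq> m'"
  shows "(\<Prod>l<d. if l = m then a else if l = m' then b else 1) = a * b"
proof -
  have "(\<Prod>l<d. if l = m then a else if l = m' then b else 1)
      = (\<Prod>l<d. (if l = m then a else 1) * (if l = m' then b else 1))"
    using assms by (intro prod.cong) auto
  then show ?thesis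
    using assms by (simp add: prod.distrib)
qed

definition edge_weight :: "('n, 'v) bf_tree \<Rightarrow> real ^ 'n \<Rightarrow> bool list \<Rightarrow> bool \<Rightarrow> real" where
  "edge_weight t x u b = (if bf_node t u then edge_prob x (t u) b else 0)"

lemma bf_node_take: "bf_node t w \<Longrightarrow> bf_node t (take j w)"
  unfolding bf_node_def by (auto simp: min_def)

lemma bf_node_if_reach_prob_nonzero: "reach_prob t x w \<noteq> 0 \<Longrightarrow> bf_node t w"
  unfolding reach_prob_def by (auto split: if_splits)

lemma reach_prob_eq_prod_edge_weight:
  "reach_prob t x w = (\<Prod>j<length w. edge_weight t x (take j w) (w ! j))"
proof (cases "bf_node t w")
  case True
  then show ?thesis
    unfolding reach_prob_def edge_weight_def using bf_node_take[OF True] by simp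
next
  case False
  then have "\<exists>j. (j < length w \<and> \<not> bf_internal (t (take j w)))
      \<and> (\<forall>j'<j. \<not> (j' < length w \<and> \<not> bf_internal (t (take j' w))))"
    unfolding bf_node_def exists_least_iff[symmetric] by auto
  then obtain j where j: "j < length w" "\<not> bf_internal (t (take j w))"
    and below: "\<And>j'. j' < j \<Longrightarrow> bf_internal (t (take j' w))"
    by auto
  have "bf_node t (take j w)"
    using j(1) below unfolding bf_node_def by (auto simp: min_def)
  moreover obtain v where "t (take j w) = Leaf v"
    using j(2) by (cases "t (take j w)") auto
  ultimately have "edge_weight t x (take j w) (w ! j) = 0"
    unfolding edge_weight_def by simp
  then have "(\<Prod>j<length w. edge_weight t x (take j w) (w ! j)) = 0"
    using j(1) by (intro prod_zero) auto
  then show ?thesis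
    using False unfolding reach_prob_def by simp
qed

lemma edge_weight_nonneg:
  assumes "bernoulli_factory t V" "x \<in> cbox 0 1"
  shows "0 \<le> edge_weight t x u b"
  using assms unfolding edge_weight_def bernoulli_factory_def mem_box_cart
  by (cases "t u") auto

lemma edge_weight_sum_le_1:
  assumes "bernoulli_factory t V" "x \<in> cbox 0 1"
  shows "edge_weight t x u True + edge_weight t x u False \<le> 1"
  using assms unfolding edge_weight_def bernoulli_factory_def mem_box_cart
  by (cases "t u") auto

lemma reach_prob_nonneg:
  assumes "bernoulli_factory t V" "x \<in> cbox 0 1"
  shows "0 \<le> reach_prob t x w"
  unfolding reach_prob_eq_prod_edge_weight using edge_weight_nonneg[OF assms]
  by (intro prod_nonneg) auto

lemma reachable_leaf_in_outputs:
  assumes "bernoulli_factory t V" "t w = Leaf v" "reach_prob t x w \<noteq> 0"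
  shows "v \<in> V"
  using assms bf_node_if_reach_prob_nonzero unfolding bernoulli_factory_def by blast

text \<open>\<open>leaf_sum t x d g\<close> is \<open>E[g(F(x)); T(x) = d]\<close>.\<close>

definition leaf_weight :: "('n, 'v) bf_tree \<Rightarrow> real ^ 'n \<Rightarrow> ('v \<Rightarrow> real) \<Rightarrow> bool list \<Rightarrow> real" where
  "leaf_weight t x g w = (case t w of Leaf v \<Rightarrow> reach_prob t x w * g v | _ \<Rightarrow> 0)"

definition leaf_sum :: "('n, 'v) bf_tree \<Rightarrow> real ^ 'n \<Rightarrow> nat \<Rightarrow> ('v \<Rightarrow> real) \<Rightarrow> real" where
  "leaf_sum t x d g = (\<Sum>w | length w = d. leaf_weight t x g w)"

lemma leaf_weight_nonneg:
  assumes "bernoulli_factory t V" "x \<in> cbox 0 1" "\<And>v. v \<in> V \<Longrightarrow> 0 \<le> g v"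
  shows "0 \<le> leaf_weight t x g w"
proof (cases "t w")
  case (Leaf v)
  then show ?thesis
    using assms reach_prob_nonneg[OF assms(1,2)] reachable_leaf_in_outputs[OF assms(1) Leaf]
    unfolding leaf_weight_def by (cases "reach_prob t x w = 0") auto
qed (simp_all add: leaf_weight_def)

lemma leaf_sum_nonneg:
  assumes "bernoulli_factory t V" "x \<in> cbox 0 1" "\<And>v. v \<in> V \<Longrightarrow> 0 \<le> g v"
  shows "0 \<le> leaf_sum t x d g"
  unfolding leaf_sum_def using leaf_weight_nonneg[OF assms] by (intro sum_nonneg)

lemma strong_bernoulli_factory_nth_sums:
  assumes "strong_bernoulli_factory t P" "y \<in> P"
  shows "(\<lambda>d. leaf_sum t y d (\<lambda>v. v $ l)) sums (y $ l)"
proof -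
  have eq: "exp_part t y d $ l = leaf_sum t y d (\<lambda>v. v $ l)" for d
    unfolding exp_part_def leaf_sum_def leaf_weight_def sum_component
    by (intro sum.cong refl) (simp split: bf_label.split)
  have "exp_part t y sums y"
    using assms unfolding strong_bernoulli_factory_def by blast
  then show ?thesis
    unfolding eq[symmetric] by (rule sums_vec_nth)
qed

lemma strong_bernoulli_factory_one_minus_nth_sums:
  assumes "strong_bernoulli_factory t P" "y \<in> P"
  shows "(\<lambda>d. leaf_sum t y d (\<lambda>v. 1 - v $ l)) sums (1 - y $ l)"
proof -
  have eq: "leaf_sum t y d (\<lambda>v. 1 - v $ l) = prob_T_eq t y d - leaf_sum t y d (\<lambda>v. v $ l)" for d
    unfolding prob_T_eq_def leaf_sum_def leaf_weight_def sum_subtractf[symmetric]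
    by (intro sum.cong refl) (simp split: bf_label.split add: algebra_simps)
  have "prob_T_eq t y sums 1"
    using assms unfolding strong_bernoulli_factory_def by blast
  from sums_diff[OF this strong_bernoulli_factory_nth_sums[OF assms]] show ?thesis
    unfolding eq .
qed

lemma reachable_leaf_value_eq_0_if_sums_0:
  assumes bf: "bernoulli_factory t V" and x: "x \<in> cbox 0 1"
    and g: "\<And>v. v \<in> V \<Longrightarrow> 0 \<le> g v" and sums0: "(\<lambda>d. leaf_sum t x d g) sums 0"
    and leaf: "t w = Leaf v" "reach_prob t x w \<noteq> 0"
  shows "g v = 0"
proof -
  have "0 \<le> leaf_sum t x d g" for d
    using leaf_sum_nonneg[OF bf x] g .
  moreover have "summable (\<lambda>d. leaf_sum t x d g)" "(\<Sum>d. leaf_sum t x d g) = 0"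
    using sums0 by (simp_all add: sums_iff)
  ultimately have "leaf_sum t x (length w) g = 0"
    using suminf_eq_zero_iff by blast
  moreover have "0 \<le> leaf_weight t x g u" for u
    using leaf_weight_nonneg[OF bf x] g .
  ultimately have "leaf_weight t x g w = 0"
    unfolding leaf_sum_def by (subst (asm) sum_nonneg_eq_0_iff) (auto simp: finite_list_length)
  then show ?thesis
    using leaf unfolding leaf_weight_def by simp
qed

lemma vertices_subset: "vertices P \<subseteq> P"
  unfolding vertices_def extreme_point_of_def by blast

lemma reachable_leaf_nth_eq_if_01:
  assumes sbf: "strong_bernoulli_factory t P" and P: "P \<subseteq> cbox 0 1"
    and y: "y \<in> P" "y $ l \<in> {0, 1}" and leaf: "t w = Leaf v" "reach_prob t y w \<noteq> 0"
  shows "v $ l = y $ l"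
proof -
  have bf: "bernoulli_factory t (vertices P)" and "y \<in> cbox 0 1"
    using assms unfolding strong_bernoulli_factory_def by auto
  have u: "0 \<le> u $ l \<and> u $ l \<le> 1" if "u \<in> vertices P" for u
    using P vertices_subset that by (force simp: mem_box_cart)
  note leaf_value_eq_0 = reachable_leaf_value_eq_0_if_sums_0[OF bf \<open>y \<in> cbox 0 1\<close> _ _ leaf]
  from y(2) consider "y $ l = 0" | "y $ l = 1"
    by blast
  then show ?thesis
  proof cases
    case 1
    then show ?thesis
      using leaf_value_eq_0[of "\<lambda>u. u $ l"] strong_bernoulli_factory_nth_sums[OF sbf y(1), of l] u
      by simp
  next
    case 2
    then show ?thesis
      using leaf_value_eq_0[of "\<lambda>u. 1 - u $ l"] strong_bernoulli_factory_one_minus_nth_sums[OF sbf y(1), of l] u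
      by simp
  qed
qed

lemma leaf_sum_Suc_le_prob_T_gt:
  assumes "bernoulli_factory t V" "x \<in> cbox 0 1" "\<And>v. v \<in> V \<Longrightarrow> g v \<le> 1"
  shows "leaf_sum t x (Suc d) g \<le> prob_T_gt t x d"
  unfolding leaf_sum_def prob_T_gt_def
proof (intro sum_mono)
  fix w
  have "reach_prob t x w * g v \<le> reach_prob t x w" if "t w = Leaf v" for v
    using assms reach_prob_nonneg[OF assms(1,2)] reachable_leaf_in_outputs[OF assms(1) that]
    by (cases "reach_prob t x w = 0") (auto intro: mult_left_le)
  then show "leaf_weight t x g w \<le> reach_prob t x w"
    unfolding leaf_weight_def using reach_prob_nonneg[OF assms(1,2)]
    by (auto split: bf_label.split)
qed

lemma null_path_has_null_coin:
  assumes "bernoulli_factory t V" "bf_node t w" "reach_prob t y w = 0"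
    and "\<And>l. l \<noteq> i \<Longrightarrow> 0 < y $ l \<and> y $ l < 1"
  shows "\<exists>m<length w. t (take m w) = Coin i \<and> edge_prob y (Coin i) (w ! m) = 0"
proof -
  obtain m where m: "m < length w" "edge_prob y (t (take m w)) (w ! m) = 0"
    using assms(2,3) unfolding reach_prob_def by (auto simp: prod_zero_iff)
  have "bf_internal (t (take m w))" "bf_node t (take m w)"
    using assms(2) m(1) bf_node_take unfolding bf_node_def by auto
  have "t (take m w) = Coin i"
  proof (cases "t (take m w)")
    case (Coin l)
    then show ?thesis
      using m(2) assms(4)[of l] by (cases "w ! m"; cases "l = i") auto
  next
    case (Const c)
    then have "0 < c \<and> c < 1"
      using assms(1) \<open>bf_node t (take m w)\<close> unfolding bernoulli_factory_def by blast
    then show ?thesis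
      using Const m(2) by (cases "w ! m") auto
  qed (use \<open>bf_internal (t (take m w))\<close> in simp)
  then show ?thesis
    using m by auto
qed

lemma leaf_path_flips_coin:
  assumes sbf: "strong_bernoulli_factory t P" and P: "P \<subseteq> cbox 0 1"
    and y: "y \<in> P" "y $ i \<in> {0, 1}" "\<And>l. l \<noteq> i \<Longrightarrow> 0 < y $ l \<and> y $ l < 1"
    and leaf: "bf_node t w" "t w = Leaf v" "v $ i \<noteq> y $ i"
  shows "\<exists>m<length w. t (take m w) = Coin i \<and> (w ! m \<longleftrightarrow> y $ i = 0)"
proof -
  have "reach_prob t y w = 0"
    using reachable_leaf_nth_eq_if_01[OF sbf P y(1,2) leaf(2)] leaf(3) by blast
  moreover have "bernoulli_factory t (vertices P)"
    using sbf unfolding strong_bernoulli_factory_def by blast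
  ultimately obtain m where "m < length w" "t (take m w) = Coin i"
    "edge_prob y (Coin i) (w ! m) = 0"
    using null_path_has_null_coin[OF _ leaf(1) _ y(3)] by blast
  then show ?thesis
    using y(2) by (cases "w ! m") auto
qed

definition flips_0_1 :: "('n, 'v) bf_tree \<Rightarrow> 'n \<Rightarrow> 'n \<Rightarrow> bool list \<Rightarrow> bool" where
  "flips_0_1 t i j w \<longleftrightarrow>
     (\<exists>m<length w. t (take m w) = Coin i \<and> \<not> w ! m) \<and> (\<exists>m<length w. t (take m w) = Coin j \<and> w ! m)"

lemma sum_paths_pinned_flips_le:
  assumes bf: "bernoulli_factory t V" and x: "x \<in> cbox 0 1" and m: "m < d" "m' < d" "m \<noteq> m'"
  shows "(\<Sum>w | length w = d. \<Prod>l<d. edge_weight t x (take l w) (w ! l) *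
            (if l = m then of_bool (t (take l w) = Coin i \<and> \<not> w ! l)
             else if l = m' then of_bool (t (take l w) = Coin j \<and> w ! l) else 1))
         \<le> (1 - x $ i) * x $ j"
proof -
  define q where "q l u b = edge_weight t x u b *
      (if l = m then of_bool (t u = Coin i \<and> \<not> b) else if l = m' then of_bool (t u = Coin j \<and> b) else 1)"
    for l u b
  define s where "s l = (if l = m then 1 - x $ i else if l = m' then x $ j else 1)" for l
  have "(\<Sum>w | length w = d. \<Prod>l<d. q l (take l w) (w ! l)) \<le> (\<Prod>l<d. s l)"
  proof (rule sum_paths_prod_le)
    show "0 \<le> q l u b" for l u b
      unfolding q_def using edge_weight_nonneg[OF bf x] by simp
    show "q l u True + q l u False \<le> s l" for l u
      using edge_weight_sum_le_1[OF bf x, of u] edge_weight_nonneg[OF bf x] x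
      unfolding q_def s_def by (auto simp: edge_weight_def mem_box_cart)
  qed
  also have "\<dots> = (1 - x $ i) * x $ j"
    unfolding s_def using m by (rule prod_lessThan_two_points)
  finally show ?thesis
    by (simp only: q_def)
qed

lemma sum_reach_prob_flips_0_1_le:
  assumes bf: "bernoulli_factory t V" and x: "x \<in> cbox 0 1"
  shows "(\<Sum>w | length w = d \<and> flips_0_1 t i j w. reach_prob t x w) \<le> real d ^ 2 * ((1 - x $ i) * x $ j)"
proof -
  define pairs where "pairs = {(m, m'). m < d \<and> m' < d \<and> m \<noteq> m'}"
  define Q where "Q p w = (\<Prod>l<d. edge_weight t x (take l w) (w ! l) *
      (if l = fst p then of_bool (t (take l w) = Coin i \<and> \<not> w ! l)
       else if l = snd p then of_bool (t (take l w) = Coin j \<and> w ! l) else 1))" for p w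
  have Q_nonneg: "0 \<le> Q p w" for p w
    unfolding Q_def using edge_weight_nonneg[OF bf x] by (intro prod_nonneg) simp
  have "finite pairs"
    unfolding pairs_def by (rule finite_subset[of _ "{..<d} \<times> {..<d}"]) auto
  have "card pairs \<le> d * d"
    using card_mono[of "{..<d} \<times> {..<d}" pairs] unfolding pairs_def by (auto simp: card_cartesian_product)
  have reach_le: "reach_prob t x w \<le> (\<Sum>p\<in>pairs. Q p w)"
    if len: "length w = d" and flips: "flips_0_1 t i j w" for w
  proof -
    obtain m m' where mm': "m < length w" "t (take m w) = Coin i" "\<not> w ! m"
      "m' < length w" "t (take m' w) = Coin j" "w ! m'"
      using flips unfolding flips_0_1_def by blast
    then have "(m, m') \<in> pairs"
      unfolding pairs_def using len by auto
    moreover have "Q (m, m') w = reach_prob t x w"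
      unfolding Q_def reach_prob_eq_prod_edge_weight len using mm' by (intro prod.cong) auto
    ultimately show ?thesis
      using \<open>finite pairs\<close> Q_nonneg by (metis member_le_sum)
  qed
  have "(\<Sum>w | length w = d \<and> flips_0_1 t i j w. reach_prob t x w)
      \<le> (\<Sum>w | length w = d \<and> flips_0_1 t i j w. \<Sum>p\<in>pairs. Q p w)"
    using reach_le by (intro sum_mono) auto
  also have "\<dots> \<le> (\<Sum>w | length w = d. \<Sum>p\<in>pairs. Q p w)"
    using Q_nonneg by (intro sum_mono2) (auto simp: finite_list_length intro: sum_nonneg)
  also have "\<dots> = (\<Sum>p\<in>pairs. \<Sum>w | length w = d. Q p w)"
    by (rule sum.swap)
  also have "\<dots> \<le> (\<Sum>p\<in>pairs. (1 - x $ i) * x $ j)"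
    unfolding Q_def pairs_def by (intro sum_mono) (auto intro: sum_paths_pinned_flips_le[OF bf x])
  also have "\<dots> \<le> real d ^ 2 * ((1 - x $ i) * x $ j)"
    using x \<open>card pairs \<le> d * d\<close> unfolding mem_box_cart
    by (simp, intro mult_right_mono) (auto simp: power2_eq_square simp flip: of_nat_mult)
  finally show ?thesis .
qed

lemma leaf_sum_one_minus_nth_le:
  assumes bf: "bernoulli_factory t V" and V: "V \<subseteq> cbox 0 1" and x: "x \<in> cbox 0 1"
    and flips: "\<And>w v. t w = Leaf v \<Longrightarrow> reach_prob t x w \<noteq> 0 \<Longrightarrow> v $ i < 1 \<Longrightarrow> flips_0_1 t i j w"
  shows "leaf_sum t x d (\<lambda>v. 1 - v $ i) \<le> real d ^ 2 * ((1 - x $ i) * x $ j)"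
proof -
  have "leaf_weight t x (\<lambda>v. 1 - v $ i) w \<le> (if flips_0_1 t i j w then reach_prob t x w else 0)" for w
  proof (cases "t w")
    case (Leaf v)
    show ?thesis
    proof (cases "reach_prob t x w = 0")
      case False
      then have "0 \<le> v $ i" "v $ i \<le> 1"
        using reachable_leaf_in_outputs[OF bf Leaf False] V by (auto simp: mem_box_cart)
      then show ?thesis
        using Leaf False flips[OF Leaf False] reach_prob_nonneg[OF bf x, of w]
        by (cases "v $ i < 1") (auto simp: leaf_weight_def intro: mult_left_le)
    qed (simp add: leaf_weight_def Leaf reach_prob_nonneg[OF bf x])
  qed (auto simp: leaf_weight_def reach_prob_nonneg[OF bf x])
  then have "leaf_sum t x d (\<lambda>v. 1 - v $ i)
      \<le> (\<Sum>w | length w = d. if flips_0_1 t i j w then reach_prob t x w else 0)"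
    unfolding leaf_sum_def by (rule sum_mono)
  also have "\<dots> = (\<Sum>w | length w = d \<and> flips_0_1 t i j w. reach_prob t x w)"
    by (simp add: sum.inter_filter[symmetric] finite_list_length)
  also have "\<dots> \<le> real d ^ 2 * ((1 - x $ i) * x $ j)"
    by (rule sum_reach_prob_flips_0_1_le[OF bf x])
  finally show ?thesis .
qed

lemma P_kn_subset_cbox: "P_kn k \<subseteq> cbox 0 1"
  by (auto simp: P_kn_def mem_box_cart)

lemma vertices_P_kn_subset_cbox: "vertices (P_kn k) \<subseteq> cbox 0 1"
  using vertices_subset P_kn_subset_cbox by (rule order_trans)

lemma P_kn_point_fixing_one_coordinate:
  fixes b :: real and i :: "'n::finite"
  assumes "0 \<le> b" "b \<le> 1" "b < real k" "real k < real CARD('n) - 1 + b"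
  obtains y where "y \<in> P_kn k" "y $ i = b" "\<And>l. l \<noteq> i \<Longrightarrow> 0 < y $ l \<and> y $ l < 1"
proof
  define y :: "real ^ 'n" where "y = (\<chi> l. if l = i then b else (real k - b) / (real CARD('n) - 1))"
  have n: "real CARD('n) - 1 > 0"
    using assms by linarith
  then show inner: "0 < y $ l \<and> y $ l < 1" if "l \<noteq> i" for l
    using assms that by (auto simp: y_def field_simps)
  show "y $ i = b"
    by (simp add: y_def)
  have "(\<Sum>l\<in>UNIV. y $ l) = b + (\<Sum>l\<in>UNIV - {i}. (real k - b) / (real CARD('n) - 1))"
    unfolding y_def by (subst sum.remove[of _ i]) (auto intro!: sum.cong)
  also have "\<dots> = b + (real CARD('n) - 1) * ((real k - b) / (real CARD('n) - 1))"
    by (simp add: card_Diff_singleton of_nat_diff Suc_leI)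
  also have "\<dots> = real k"
    using n by simp
  finally have "(\<Sum>l\<in>UNIV. y $ l) = real k" .
  moreover have "0 \<le> y $ l \<and> y $ l \<le> 1" for l
    using assms inner[of l] \<open>y $ i = b\<close> by (cases "l = i") auto
  ultimately show "y \<in> P_kn k"
    unfolding P_kn_def by blast
qed

lemma P_kn_point_splitting_two_coordinates:
  fixes i j :: "'n::finite" and e :: real
  assumes "i \<noteq> j" "0 < k" "k + 1 \<le> CARD('n)" "0 \<le> e" "e \<le> 1"
  obtains x where "x \<in> P_kn k" "x $ i = 1 - e" "x $ j = e" "\<And>l. l \<notin> {i, j} \<Longrightarrow> x $ l \<in> {0, 1}"
proof -
  have "k - 1 \<le> card (UNIV - {i, j})"
    using assms by (simp add: card_Diff_subset)
  then obtain A where A: "A \<subseteq> UNIV - {i, j}" "card A = k - 1"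
    by (meson obtain_subset_with_card_n)
  define x :: "real ^ 'n" where
    "x = (\<chi> l. if l = i then 1 - e else if l = j then e else of_bool (l \<in> A))"
  have nth: "x $ i = 1 - e" "x $ j = e" "\<And>l. l \<notin> {i, j} \<Longrightarrow> x $ l \<in> {0, 1}"
    using assms(1) by (auto simp: x_def)
  have "x $ l = (if l = i then 1 - e else 0) + (if l = j then e else 0) + of_bool (l \<in> A)" for l
    using A(1) assms(1) by (auto simp: x_def)
  then have "(\<Sum>l\<in>UNIV. x $ l) = (1 - e) + e + real (card A)"
    by (simp add: sum.distrib Int_absorb1)
  then have "(\<Sum>l\<in>UNIV. x $ l) = real k"
    using A(2) assms(2) by (simp add: of_nat_diff)
  moreover have "0 \<le> x $ l \<and> x $ l \<le> 1" for l
    using assms(4,5) by (auto simp: x_def)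
  ultimately have "x \<in> P_kn k"
    unfolding P_kn_def by blast
  then show thesis
    using that nth by blast
qed

lemma P_kn_reachable_leaf_flips_0_1:
  fixes t :: "('n::finite, real ^ 'n) bf_tree"
  assumes k: "1 < k" "k + 1 < CARD('n)"
    and sbf: "strong_bernoulli_factory t (P_kn k)" and "i \<noteq> j"
    and x: "x \<in> P_kn k" "x $ i + x $ j = 1" "\<And>l. l \<notin> {i, j} \<Longrightarrow> x $ l \<in> {0, 1}"
    and leaf: "t w = Leaf v" "reach_prob t x w \<noteq> 0" "v $ i < 1"
  shows "flips_0_1 t i j w"
proof -
  have "bernoulli_factory t (vertices (P_kn k))"
    using sbf unfolding strong_bernoulli_factory_def by blast
  then have "v \<in> P_kn k"
    using reachable_leaf_in_outputs[OF _ leaf(1,2)] vertices_subset by blast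
  have "v $ l - x $ l = 0" if "l \<in> UNIV - {i, j}" for l
    using reachable_leaf_nth_eq_if_01[OF sbf P_kn_subset_cbox x(1) x(3) leaf(1,2)] that by simp
  then have "(\<Sum>l\<in>UNIV. v $ l - x $ l) = (\<Sum>l\<in>{i, j}. v $ l - x $ l)"
    by (intro sum.mono_neutral_right) auto
  moreover have "(\<Sum>l\<in>UNIV. v $ l - x $ l) = 0"
    using \<open>v \<in> P_kn k\<close> x(1) unfolding P_kn_def by (simp add: sum_subtractf)
  ultimately have "v $ j > 0"
    using \<open>i \<noteq> j\<close> x(2) leaf(3) by simp
  obtain y1 :: "real ^ 'n" where y1: "y1 \<in> P_kn k" "y1 $ i = 1" "\<And>l. l \<noteq> i \<Longrightarrow> 0 < y1 $ l \<and> y1 $ l < 1"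
    using P_kn_point_fixing_one_coordinate[where b = 1 and i = i and k = k] k by auto
  obtain y2 :: "real ^ 'n" where y2: "y2 \<in> P_kn k" "y2 $ j = 0" "\<And>l. l \<noteq> j \<Longrightarrow> 0 < y2 $ l \<and> y2 $ l < 1"
    using P_kn_point_fixing_one_coordinate[where b = 0 and i = j and k = k] k by auto
  have "bf_node t w"
    using leaf(2) by (rule bf_node_if_reach_prob_nonzero)
  have "\<exists>m<length w. t (take m w) = Coin i \<and> (w ! m \<longleftrightarrow> y1 $ i = 0)"
    using leaf_path_flips_coin[where i = i, OF sbf P_kn_subset_cbox y1(1) _ y1(3) \<open>bf_node t w\<close> leaf(1)]
      y1(2) leaf(3) by simp
  moreover have "\<exists>m<length w. t (take m w) = Coin j \<and> (w ! m \<longleftrightarrow> y2 $ j = 0)"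
    using leaf_path_flips_coin[where i = j, OF sbf P_kn_subset_cbox y2(1) _ y2(3) \<open>bf_node t w\<close> leaf(1)]
      y2(2) \<open>v $ j > 0\<close> by simp
  ultimately show ?thesis
    using y1(2) y2(2) unfolding flips_0_1_def by simp
qed

lemma cube_times_power_tendsto_0:
  fixes c :: real
  assumes "0 \<le> c" "c < 1"
  shows "(\<lambda>n. real n ^ 3 * c ^ n) \<longlonglongrightarrow> 0"
proof -
  define r where "r = root 3 c"
  have r: "0 \<le> r" "r < 1" "r ^ 3 = c"
    using assms by (auto simp: r_def real_root_pow_pos2)
  then have "(\<lambda>n. real n * r ^ n) \<longlonglongrightarrow> 0"
    by (intro powser_times_n_limit_0) simp
  then have "(\<lambda>n. (real n * r ^ n) ^ 3) \<longlonglongrightarrow> 0"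
    using tendsto_power by fastforce
  moreover have "(r ^ n) ^ 3 = c ^ n" for n
    using r(3) by (metis mult.commute power_mult)
  then have "(real n * r ^ n) ^ 3 = real n ^ 3 * c ^ n" for n
    by (simp add: power_mult_distrib)
  ultimately show ?thesis
    by simp
qed

lemma suminf_le_quadratic_head_geometric_tail:
  fixes a :: "nat \<Rightarrow> real"
  assumes "summable a" "\<And>d. a d \<le> real d ^ 2 * e ^ 2" "\<And>d. m \<le> d \<Longrightarrow> a (Suc d) \<le> c ^ d"
    and "0 \<le> c" "c < 1"
  shows "suminf a \<le> real (Suc m) ^ 3 * e ^ 2 + c ^ m / (1 - c)"
proof -
  have "a d \<le> real (Suc m) ^ 2 * e ^ 2" if "d < Suc m" for d
  proof -
    have "real d ^ 2 \<le> real (Suc m) ^ 2"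
      using that by (intro power_mono) auto
    then show ?thesis
      using assms(2)[of d] by (meson mult_right_mono zero_le_power2 order_trans)
  qed
  then have "(\<Sum>d<Suc m. a d) \<le> (\<Sum>d<Suc m. real (Suc m) ^ 2 * e ^ 2)"
    by (intro sum_mono) auto
  also have "\<dots> = real (Suc m) ^ 3 * e ^ 2"
    by (simp only: sum_constant card_lessThan) (simp add: eval_nat_numeral)
  finally have head: "(\<Sum>d<Suc m. a d) \<le> real (Suc m) ^ 3 * e ^ 2" .
  have "a (d + Suc m) \<le> c ^ m * c ^ d" for d
    using assms(3)[of "d + m"] by (simp add: power_add mult.commute)
  moreover have "summable (\<lambda>d. a (d + Suc m))"
    using summable_iff_shift[of a "Suc m"] assms(1) by blast
  moreover have "summable (\<lambda>d. c ^ m * c ^ d)"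
    using assms(4,5) by (intro summable_mult summable_geometric) simp
  ultimately have "(\<Sum>d. a (d + Suc m)) \<le> (\<Sum>d. c ^ m * c ^ d)"
    by (rule suminf_le)
  also have "\<dots> = c ^ m / (1 - c)"
    using assms(4,5) by (simp add: suminf_mult summable_geometric suminf_geometric)
  finally show ?thesis
    using head suminf_split_initial_segment[OF assms(1), of "Suc m"] by linarith
qed

lemma quadratic_head_geometric_tail_sum_lt:
  fixes c :: real
  assumes "c < 1"
  obtains e where "0 < e" "e < 1"
    "\<And>a. (\<And>d. 0 \<le> a d) \<Longrightarrow> (\<And>d. a d \<le> real d ^ 2 * e ^ 2) \<Longrightarrow> (\<And>d. 0 < d \<Longrightarrow> a (Suc d) \<le> c ^ d)
      \<Longrightarrow> summable a \<Longrightarrow> suminf a < e"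
proof -
  \<comment> \<open>\<open>e\<close> is fixed before \<open>a\<close>, so it is chosen for \<open>max c 0\<close>; any admissible \<open>a\<close> then forces
    \<open>c \<ge> 0\<close> via \<open>0 \<le> a 2 \<le> c\<close>.\<close>
  define c' where "c' = max c 0"
  have c': "0 \<le> c'" "c' < 1"
    using assms by (auto simp: c'_def)
  have "\<forall>\<^sub>F n in sequentially. 1 \<le> n \<and> real n ^ 3 * c' ^ n < (1 - c') / 32"
    using c' by (intro eventually_conj eventually_ge_at_top order_tendstoD(2)[OF cube_times_power_tendsto_0]) auto
  then obtain m where "1 \<le> m" and m: "real m ^ 3 * c' ^ m < (1 - c') / 32"
    unfolding eventually_sequentially by blast
  define D where "D = real (Suc m) ^ 3"
  have "D \<le> (2 * real m) ^ 3"
    unfolding D_def using \<open>1 \<le> m\<close> by (intro power_mono) auto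
  then have "D * c' ^ m \<le> 8 * (real m ^ 3 * c' ^ m)"
    using mult_right_mono[of D "(2 * real m) ^ 3" "c' ^ m"] c' by (simp add: power_mult_distrib)
  with m have small_tail: "D * c' ^ m < (1 - c') / 4"
    by linarith
  have "8 \<le> D"
    unfolding D_def using \<open>1 \<le> m\<close> power_mono[of 2 "real (Suc m)" 3] by simp
  define e where "e = 1 / (2 * D)"
  show thesis
  proof (rule that)
    show "0 < e" "e < 1"
      using \<open>8 \<le> D\<close> by (auto simp: e_def)
    fix a :: "nat \<Rightarrow> real"
    assume nonneg: "\<And>d. 0 \<le> a d" and head: "\<And>d. a d \<le> real d ^ 2 * e ^ 2"
      and tail: "\<And>d. 0 < d \<Longrightarrow> a (Suc d) \<le> c ^ d" and "summable a"
    have "c = c'"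
      using nonneg[of "Suc 1"] tail[of 1] by (simp add: c'_def)
    have "suminf a \<le> D * e ^ 2 + c ^ m / (1 - c)"
      unfolding D_def using \<open>1 \<le> m\<close> c' \<open>c = c'\<close>
      by (intro suminf_le_quadratic_head_geometric_tail \<open>summable a\<close> head tail) auto
    also have "D * e ^ 2 = e / 2"
      using \<open>8 \<le> D\<close> by (simp add: e_def power2_eq_square)
    also have "c ^ m / (1 - c) < e / 2"
      using small_tail c' \<open>c = c'\<close> \<open>8 \<le> D\<close> by (simp add: e_def pos_divide_less_eq pos_less_divide_eq mult_ac)
    finally show "suminf a < e"
      by simp
  qed
qed

lemma P_kn_leaf_sum_bounds:
  fixes t :: "('n::finite, real ^ 'n) bf_tree"
  assumes k: "1 < k" "k + 1 < CARD('n)" and sbf: "strong_bernoulli_factory t (P_kn k)"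
    and e: "0 < e" "e < 1"
  obtains x i where "x \<in> P_kn k" "(\<lambda>d. leaf_sum t x d (\<lambda>v. 1 - v $ i)) sums e"
    "\<And>d. 0 \<le> leaf_sum t x d (\<lambda>v. 1 - v $ i)"
    "\<And>d. leaf_sum t x d (\<lambda>v. 1 - v $ i) \<le> real d ^ 2 * e ^ 2"
    "\<And>d. leaf_sum t x (Suc d) (\<lambda>v. 1 - v $ i) \<le> prob_T_gt t x d"
proof -
  have "\<not> CARD('n) \<le> Suc 0"
    using k by linarith
  then have "\<exists>i j :: 'n. i \<noteq> j"
    using card_le_Suc0_iff_eq[of "UNIV :: 'n set"] by auto
  then obtain i j :: 'n where "i \<noteq> j"
    by blast
  then obtain x where x: "x \<in> P_kn k" "x $ i = 1 - e" "x $ j = e" "\<And>l. l \<notin> {i, j} \<Longrightarrow> x $ l \<in> {0, 1}"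
    using P_kn_point_splitting_two_coordinates[of i j k e] k e by auto
  have "x \<in> cbox 0 1" "x $ i + x $ j = 1"
    using x P_kn_subset_cbox by auto
  have bf: "bernoulli_factory t (vertices (P_kn k))"
    using sbf unfolding strong_bernoulli_factory_def by blast
  have outputs: "0 \<le> v $ i \<and> v $ i \<le> 1" if "v \<in> vertices (P_kn k)" for v
    using subsetD[OF vertices_P_kn_subset_cbox that] by (simp add: mem_box_cart)
  show thesis
  proof (rule that[OF x(1)])
    show "(\<lambda>d. leaf_sum t x d (\<lambda>v. 1 - v $ i)) sums e"
      using strong_bernoulli_factory_one_minus_nth_sums[OF sbf x(1), of i] x(2) by simp
    show "0 \<le> leaf_sum t x d (\<lambda>v. 1 - v $ i)" for d
      by (rule leaf_sum_nonneg[OF bf \<open>x \<in> cbox 0 1\<close>]) (simp add: outputs)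
    show "leaf_sum t x d (\<lambda>v. 1 - v $ i) \<le> real d ^ 2 * e ^ 2" for d
      using leaf_sum_one_minus_nth_le[OF bf vertices_P_kn_subset_cbox \<open>x \<in> cbox 0 1\<close>
          P_kn_reachable_leaf_flips_0_1[OF k sbf \<open>i \<noteq> j\<close> x(1) \<open>x $ i + x $ j = 1\<close> x(4)], where d = d]
      unfolding x(2,3) by (simp add: power2_eq_square)
    show "leaf_sum t x (Suc d) (\<lambda>v. 1 - v $ i) \<le> prob_T_gt t x d" for d
      by (rule leaf_sum_Suc_le_prob_T_gt[OF bf \<open>x \<in> cbox 0 1\<close>]) (simp add: outputs)
  qed
qed

theorem theorem7p1:
  fixes k :: nat
  assumes "1 < k" and "k + 1 < CARD('n)"
  shows "\<not> (\<exists>t :: ('n::finite, real ^ 'n) bf_tree.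
            strong_bernoulli_factory t (P_kn k) \<and> converges_exponentially t (P_kn k))"
proof
  assume "\<exists>t :: ('n, real ^ 'n) bf_tree. strong_bernoulli_factory t (P_kn k) \<and> converges_exponentially t (P_kn k)"
  then obtain t :: "('n, real ^ 'n) bf_tree" and c where sbf: "strong_bernoulli_factory t (P_kn k)"
    and "c < 1" and rate: "\<And>d x. 0 < d \<Longrightarrow> x \<in> P_kn k \<Longrightarrow> prob_T_gt t x d \<le> c ^ d"
    unfolding converges_exponentially_def by blast
  obtain e where e: "0 < e" "e < 1" and sum_lt: "\<And>a. (\<And>d. 0 \<le> a d) \<Longrightarrow> (\<And>d. a d \<le> real d ^ 2 * e ^ 2)
      \<Longrightarrow> (\<And>d. 0 < d \<Longrightarrow> a (Suc d) \<le> c ^ d) \<Longrightarrow> summable a \<Longrightarrow> suminf a < e"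
    using quadratic_head_geometric_tail_sum_lt[OF \<open>c < 1\<close>] by blast
  obtain x i where "x \<in> P_kn k" and sums: "(\<lambda>d. leaf_sum t x d (\<lambda>v. 1 - v $ i)) sums e"
    and bounds: "\<And>d. 0 \<le> leaf_sum t x d (\<lambda>v. 1 - v $ i)"
      "\<And>d. leaf_sum t x d (\<lambda>v. 1 - v $ i) \<le> real d ^ 2 * e ^ 2"
      "\<And>d. leaf_sum t x (Suc d) (\<lambda>v. 1 - v $ i) \<le> prob_T_gt t x d"
    using P_kn_leaf_sum_bounds[OF assms sbf e] by blast
  have "(\<Sum>d. leaf_sum t x d (\<lambda>v. 1 - v $ i)) < e"
    using bounds(1,2) order_trans[OF bounds(3) rate[OF _ \<open>x \<in> P_kn k\<close>]] sums_summable[OF sums]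
    by (rule sum_lt)
  with sums show False
    by (simp add: sums_iff)
qed

end
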